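(* Every deterministic mechanism for locating one facility on $[0,1]$ that is anonymous, Pareto efficient and strategy proof has approximation ratio at least $\frac{3}{2\sqrt2}$ for the Nash welfare.
   Context: Agents $1,\dots,n$ report locations $x_1,\dots,x_n\in[0,1]$; a deterministic mechanism $f$ maps each profile (for each $n$) to a facility location $y=f(x_1,\dots,x_n)\in[0,1]$. Agent $i$'s utility is $u_i=1-|x_i-y|$; the Nash welfare is $\left(\prod_i u_i\right)^{1/n}$. $f$ is anonymous if permuting the reports does not change the output; Pareto efficient if for no profile is there a location $z$ with $|x_j-z|\le|x_j-f(x)|$ for all $j$ and strict inequality for some $i$; strategy proof if no agent $i$ can report some $x_i'$ and obtain $|x_i-f(x_1,\dots,x_i',\dots,x_n)|<|x_i-f(x)|$. The approximation ratio of $f$ for the Nash welfare is the supremum over all profiles $x$ of $\mathrm{OPT}(x)/\mathrm{NW}(f(x))$, where $\mathrm{OPT}(x)$ is the maximum Nash welfare over facility locations in $[0,1]$. *)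

theory Defs
  imports "HOL-Analysis.Analysis" "HOL-Library.Multiset"
begin

definition valid_profile :: "real list \<Rightarrow> bool" where
  "valid_profile xs \<longleftrightarrow> xs \<noteq> [] \<and> set xs \<subseteq> {0..1}"

definition utility :: "real \<Rightarrow> real \<Rightarrow> real" where
  "utility x y = 1 - \<bar>x - y\<bar>"

definition nash_welfare :: "real list \<Rightarrow> real \<Rightarrow> real" where
  "nash_welfare xs y = root (length xs) (\<Prod>i<length xs. utility (xs ! i) y)"

definition opt_nw :: "real list \<Rightarrow> real" where
  "opt_nw xs = (SUP y\<in>{0..1}. nash_welfare xs y)"

definition mechanism :: "(real list \<Rightarrow> real) \<Rightarrow> bool" where
  "mechanism f \<longleftrightarrow> (\<forall>xs. valid_profile xs \<longrightarrow> f xs \<in> {0..1})"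

definition anonymous :: "(real list \<Rightarrow> real) \<Rightarrow> bool" where
  "anonymous f \<longleftrightarrow> (\<forall>xs ys. valid_profile xs \<longrightarrow> mset xs = mset ys \<longrightarrow> f xs = f ys)"

definition pareto_efficient :: "(real list \<Rightarrow> real) \<Rightarrow> bool" where
  "pareto_efficient f \<longleftrightarrow> (\<forall>xs. valid_profile xs \<longrightarrow>
     \<not> (\<exists>z\<in>{0..1}. (\<forall>j<length xs. \<bar>xs ! j - z\<bar> \<le> \<bar>xs ! j - f xs\<bar>) \<and>
                       (\<exists>i<length xs. \<bar>xs ! i - z\<bar> < \<bar>xs ! i - f xs\<bar>)))"

definition strategy_proof :: "(real list \<Rightarrow> real) \<Rightarrow> bool" where
  "strategy_proof f \<longleftrightarrow> (\<forall>xs i x'. valid_profile xs \<longrightarrow> i < length xs \<longrightarrow> x' \<in> {0..1} \<longrightarrow>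
     \<not> (\<bar>xs ! i - f (xs[i := x'])\<bar> < \<bar>xs ! i - f xs\<bar>))"

text \<open>Approximation ratio: supremum over all profiles of OPT/NW, in the extended reals
(a profile with NW = 0 contributes +\<infinity>, since OPT > 0).\<close>
definition approx_ratio :: "(real list \<Rightarrow> real) \<Rightarrow> ereal" where
  "approx_ratio f = (SUP xs\<in>{xs. valid_profile xs}. ereal (opt_nw xs) / ereal (nash_welfare xs (f xs)))"

end

theory Submission
  imports Defs
begin

text \<open>Let \<open>p = f [0, 1]\<close>. An agent that moves its
report onto the current outcome cannot change the outcome, since otherwise it could move
back and get its ideal location. Hence \<open>f [p, 1] = p\<close> and \<open>f [0, p] = p\<close>. In the one of
these two profiles whose agents are at distance \<open>d \<ge> 1/2\<close>, the mechanism serves one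
agent at distance \<open>d\<close>, with Nash welfare \<open>sqrt (1 - d)\<close>, while the midpoint achieves
\<open>1 - d/2\<close>; with \<open>q = 1 - d \<le> 1/2\<close> the ratio \<open>(1 + q) / (2 * sqrt q)\<close> is at least
\<open>3 / (2 * sqrt 2)\<close>.\<close>

lemma strategy_proof_report_outcome:
  assumes "mechanism f" "strategy_proof f" "valid_profile xs" "i < length xs"
  shows "f (xs[i := f xs]) = f xs"
proof -
  define ys where "ys = xs[i := f xs]"
  have "f xs \<in> {0..1}" using assms(1,3) unfolding mechanism_def by blast
  then have "valid_profile ys"
    using assms(3) set_update_subset_insert[of xs i "f xs"]
    unfolding ys_def valid_profile_def by auto
  moreover have "ys ! i = f xs" "ys[i := xs ! i] = xs" using assms(4) by (simp_all add: ys_def)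
  moreover have "xs ! i \<in> {0..1}" using assms(3,4) nth_mem unfolding valid_profile_def by blast
  ultimately have "\<not> \<bar>f xs - f xs\<bar> < \<bar>f xs - f ys\<bar>"
    using assms(2,4) unfolding strategy_proof_def by (metis length_list_update)
  then show ?thesis unfolding ys_def by simp
qed

lemma nash_welfare_pair: "nash_welfare [a, b] y = sqrt (utility a y * utility b y)"
  unfolding nash_welfare_def sqrt_def by (simp add: numeral_2_eq_2 lessThan_Suc)

lemma nash_welfare_le_1:
  assumes "set xs \<subseteq> {0..1}" "y \<in> {0..1}"
  shows "nash_welfare xs y \<le> 1"
proof -
  have "(\<Prod>i<length xs. utility (xs ! i) y) \<le> 1"
  proof (rule prod_le_1)
    fix i assume "i \<in> {..<length xs}"
    then have "xs ! i \<in> {0..1}" by (meson assms(1) nth_mem subsetD lessThan_iff)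
    then show "0 \<le> utility (xs ! i) y \<and> utility (xs ! i) y \<le> 1"
      using assms(2) unfolding utility_def by auto
  qed
  then show ?thesis unfolding nash_welfare_def by (cases "length xs") auto
qed

lemma nash_welfare_le_opt_nw:
  assumes "set xs \<subseteq> {0..1}" "y \<in> {0..1}"
  shows "nash_welfare xs y \<le> opt_nw xs"
  unfolding opt_nw_def
proof (rule cSUP_upper[OF assms(2)])
  show "bdd_above (nash_welfare xs ` {0..1})"
    using nash_welfare_le_1[OF assms(1)] by (intro bdd_aboveI2[where M = 1]) auto
qed

lemma opt_nw_pair_ge_midpoint:
  assumes "0 \<le> a" "a \<le> b" "b \<le> 1"
  shows "1 - (b - a) / 2 \<le> opt_nw [a, b]"
proof -
  have "utility a ((a + b) / 2) = 1 - (b - a) / 2" "utility b ((a + b) / 2) = 1 - (b - a) / 2"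
    using assms unfolding utility_def by (auto simp: field_simps)
  moreover have "0 \<le> 1 - (b - a) / 2" using assms by simp
  ultimately have "nash_welfare [a, b] ((a + b) / 2) = 1 - (b - a) / 2"
    by (simp add: nash_welfare_pair)
  moreover have "nash_welfare [a, b] ((a + b) / 2) \<le> opt_nw [a, b]"
    using assms by (intro nash_welfare_le_opt_nw) auto
  ultimately show ?thesis by simp
qed

lemma nash_welfare_pair_endpoint:
  assumes "a \<le> b" "b - a \<le> 1" "y \<in> {a, b}"
  shows "nash_welfare [a, b] y = sqrt (1 - (b - a))"
proof -
  have "utility a y * utility b y = 1 - (b - a)"
    using assms unfolding utility_def by auto
  then show ?thesis by (simp add: nash_welfare_pair)
qed

lemma three_div_two_sqrt2_le:
  fixes q :: real
  assumes "0 < q" "q \<le> 1/2"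
  shows "3 / (2 * sqrt 2) \<le> (1 + q) / (2 * sqrt q)"
proof -
  have "(3 * sqrt q)\<^sup>2 \<le> (sqrt 2 * (1 + q))\<^sup>2"
  proof -
    have "0 \<le> (1 - 2 * q) * (2 - q)" using assms by simp
    then have "9 * q \<le> 2 * (1 + q)\<^sup>2" by (simp add: power2_eq_square algebra_simps)
    moreover have "(3 * sqrt q)\<^sup>2 = 9 * q" using assms(1) by (simp add: power_mult_distrib)
    moreover have "(sqrt 2 * (1 + q))\<^sup>2 = 2 * (1 + q)\<^sup>2" by (simp add: power_mult_distrib)
    ultimately show ?thesis by simp
  qed
  then have "3 * sqrt q \<le> sqrt 2 * (1 + q)"
    by (rule power2_le_imp_le) (use assms(1) in simp)
  then show ?thesis using assms(1) by (simp add: field_simps)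
qed

lemma ratio_pair_endpoint_ge:
  assumes "0 \<le> a" "a \<le> b" "b \<le> 1" "1/2 \<le> b - a" "y \<in> {a, b}"
  shows "ereal (3 / (2 * sqrt 2)) \<le> ereal (opt_nw [a, b]) / ereal (nash_welfare [a, b] y)"
proof -
  define q where "q = 1 - (b - a)"
  have nw: "nash_welfare [a, b] y = sqrt q"
    using nash_welfare_pair_endpoint assms unfolding q_def by simp
  have opt: "(1 + q) / 2 \<le> opt_nw [a, b]"
  proof -
    have "(1 + q) / 2 = 1 - (b - a) / 2" unfolding q_def by (simp add: field_simps)
    then show ?thesis using opt_nw_pair_ge_midpoint[OF assms(1-3)] by (simp only:)
  qed
  show ?thesis
  proof (cases "q = 0")
    case True
    then show ?thesis using nw opt by simp
  next
    case False
    then have "0 < q" using assms unfolding q_def by simp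
    have "3 / (2 * sqrt 2) \<le> (1 + q) / 2 / sqrt q"
      using three_div_two_sqrt2_le[of q] \<open>0 < q\<close> assms unfolding q_def by simp
    also have "\<dots> \<le> opt_nw [a, b] / sqrt q"
      using opt \<open>0 < q\<close> by (intro divide_right_mono) auto
    finally have "3 / (2 * sqrt 2) \<le> opt_nw [a, b] / sqrt q" .
    then show ?thesis using nw \<open>0 < q\<close> by simp
  qed
qed

lemma ratio_le_approx_ratio:
  "valid_profile xs \<Longrightarrow> ereal (opt_nw xs) / ereal (nash_welfare xs (f xs)) \<le> approx_ratio f"
  unfolding approx_ratio_def by (rule SUP_upper) simp

theorem theorem12:
  fixes f :: "real list \<Rightarrow> real"
  assumes "mechanism f" and "anonymous f" and "pareto_efficient f" and "strategy_proof f"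
  shows "approx_ratio f \<ge> ereal (3 / (2 * sqrt 2))"
proof -
  define p where "p = f [0, 1]"
  have v01: "valid_profile [0, 1]" unfolding valid_profile_def by auto
  then have p: "0 \<le> p" "p \<le> 1" using assms(1) unfolding mechanism_def p_def by auto
  obtain a b where ab: "valid_profile [a, b]" "f [a, b] = p" "p \<in> {a, b}"
    "0 \<le> a" "a \<le> b" "b \<le> 1" "1/2 \<le> b - a"
  proof (cases "p \<le> 1/2")
    case True
    have "f [p, 1] = p"
      using strategy_proof_report_outcome[OF assms(1,4) v01, of 0] by (simp add: p_def)
    then show ?thesis using that[of p 1] True p by (simp add: valid_profile_def)
  next
    case False
    have "f [0, p] = p"
      using strategy_proof_report_outcome[OF assms(1,4) v01, of 1] by (simp add: p_def)
    then show ?thesis using that[of 0 p] False p by (simp add: valid_profile_def)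
  qed
  have "ereal (3 / (2 * sqrt 2)) \<le> ereal (opt_nw [a, b]) / ereal (nash_welfare [a, b] (f [a, b]))"
    using ratio_pair_endpoint_ge ab by simp
  also have "\<dots> \<le> approx_ratio f" by (rule ratio_le_approx_ratio[OF ab(1)])
  finally show ?thesis .
qed

end
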